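(* For every $j\ge 0$ the limit $p_j^*=\lim_{n\to\infty}p_{j,n}$ exists; put $u_0^*=0$ and $u_j^*=1/p_{j-1}^*$ for $j\ge1$, and $$S_N=\sum_{j=0}^N\bigl(3-2p_j^*-p_j^*u_j^*\bigr).$$ Then the limits $S=\lim_{N\to\infty}S_N$ and $C=\lim_{n\to\infty}C_n$ exist, and $C=2S+1$.
   Context: For $n\ge1$ and $\mathbf{x}=(x_1,\dots,x_n)\in(0,\infty)^n$ let $f_n(\mathbf{x})=\sum_{i=1}^n x_i+\sum_{1\le i\le j\le n}\prod_{k=i}^j \frac1{x_k}$, $A_n=\inf_{\mathbf{x}\in(0,\infty)^n} f_n(\mathbf{x})$, and $C_n=3n-A_n$. Let $\Phi$ be the partial map of $\mathbb{R}^2$ defined for $p\ne0$ by $\Phi(p,u)=\bigl(p^2(u+1)-1,\ 1/p\bigr)$. For $n\ge1$, the trajectory $T_n$ is the (existing and unique) finite sequence $(p_{j,n},u_{j,n})$, $j=0,\dots,n$, with $(p_{j,n},u_{j,n})=\Phi(p_{j-1,n},u_{j-1,n})$ for $1\le j\le n$, $u_{0,n}=0$, $p_{n,n}=0$, and $p_{j,n}>0$ for $0\le j\le n-1$. *)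

theory Defs
  imports Complex_Main
begin

text \<open>Vectors x in (0,oo)^n are functions nat => real, only indices 1..n are used.\<close>
definition f_fun :: "nat \<Rightarrow> (nat \<Rightarrow> real) \<Rightarrow> real" where
  "f_fun n x = (\<Sum>i=1..n. x i) + (\<Sum>i=1..n. \<Sum>j=i..n. \<Prod>k=i..j. 1 / x k)"

definition A_val :: "nat \<Rightarrow> real" where
  "A_val n = (INF x\<in>{x. \<forall>i\<in>{1..n}. x i > 0}. f_fun n x)"

definition C_val :: "nat \<Rightarrow> real" where
  "C_val n = 3 * real n - A_val n"

definition Phi :: "real \<times> real \<Rightarrow> real \<times> real" where
  "Phi pu = (let (p, u) = pu in (p^2 * (u + 1) - 1, 1 / p))"

definition is_traj :: "nat \<Rightarrow> (nat \<Rightarrow> real) \<Rightarrow> (nat \<Rightarrow> real) \<Rightarrow> bool" where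
  "is_traj n p u \<longleftrightarrow>
     u 0 = 0 \<and> p n = 0 \<and> (\<forall>j<n. p j > 0) \<and>
     (\<forall>j\<in>{1..n}. p (j - 1) \<noteq> 0 \<and> (p j, u j) = Phi (p (j - 1), u (j - 1)))"

text \<open>p_{j,n}: the j-th p-coordinate of the (unique) trajectory T_n, meaningful for j \<le> n.\<close>
definition p_traj :: "nat \<Rightarrow> nat \<Rightarrow> real" where
  "p_traj j n = (THE x. \<exists>p u. is_traj n p u \<and> p j = x)"

end

(*
  In the coordinates (p, r) = (p, p u) the map Phi becomes (p, r) |-> (p (p + r) - 1, p + r - 1/p),
  and T_n is the orbit started at (a_n, 0), where a_n is the unique start whose orbit stays positive
  for n steps and vanishes at step n.  Orbits depend monotonically on the start, so a_n increases to a
  limit a*, and p_{j,n} tends to the j-th point of the orbit of a*.  Since Phi is reversible, the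
  reversed orbit j |-> (u_{n-j}, p_{n-j}) is again a trajectory, which gives p_j p_{n-1-j} = 1; hence
  T_n decreases and stays above 1 on its first half.

  The vector x_k = p_{k-1} + r_{k-1} solves the critical equations of f_n, and f_n is convex in the
  logarithms of the x_k, so A_n = f_n(x) and C_n = sum_{j<n} (3 - 2 p_j - r_j).  The limit orbit
  decreases to 1 with ratio 1/3, which bounds the summands geometrically; by the symmetry the second
  half of the sum for C_n mirrors the first one, and dominated convergence gives C = 2 S + 1.
*)
theory Submission
  imports Defs "HOL-Analysis.Uniform_Limit"
begin

section \<open>The shooting recurrence\<close>

fun shoot :: "real \<Rightarrow> nat \<Rightarrow> real \<times> real" where
  "shoot a 0 = (a, 0)"
| "shoot a (Suc k) = (let (p, r) = shoot a k in (p * (p + r) - 1, p + r - 1 / p))"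

definition shoot_p :: "real \<Rightarrow> nat \<Rightarrow> real" where
  "shoot_p a k = fst (shoot a k)"

definition shoot_r :: "real \<Rightarrow> nat \<Rightarrow> real" where
  "shoot_r a k = snd (shoot a k)"

lemma shoot_p_0 [simp]: "shoot_p a 0 = a"
  and shoot_r_0 [simp]: "shoot_r a 0 = 0"
  by (simp_all add: shoot_p_def shoot_r_def)

lemma shoot_p_Suc: "shoot_p a (Suc k) = shoot_p a k * (shoot_p a k + shoot_r a k) - 1"
  and shoot_r_Suc: "shoot_r a (Suc k) = shoot_p a k + shoot_r a k - 1 / shoot_p a k"
  by (simp_all add: shoot_p_def shoot_r_def split: prod.splits)

lemma shoot_r_Suc_eq_ratio:
  "shoot_p a k \<noteq> 0 \<Longrightarrow> shoot_r a (Suc k) = shoot_p a (Suc k) / shoot_p a k"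
  by (simp add: shoot_p_Suc shoot_r_Suc field_simps)

lemma shoot_p_second_order:
  assumes "shoot_p a k \<noteq> 0"
  shows "shoot_p a (Suc (Suc k)) + 1 = shoot_p a (Suc k) ^ 2 * (1 + 1 / shoot_p a k)"
  using assms
  by (simp add: shoot_p_Suc[of a "Suc k"] shoot_r_Suc_eq_ratio field_simps power2_eq_square)

lemma shoot_r_nonneg:
  assumes "\<And>j. j \<le> k \<Longrightarrow> shoot_p a j > 0"
  shows "shoot_r a k \<ge> 0"
proof (cases k)
  case (Suc m)
  then have "shoot_p a m > 0" "shoot_p a k > 0"
    using assms by auto
  then show ?thesis
    using shoot_r_Suc_eq_ratio[of a m] Suc by simp
qed simp

lemma shoot_strict_mono:
  assumes "a < b" "\<And>j. j < k \<Longrightarrow> shoot_p a j > 0"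
  shows "shoot_p a k < shoot_p b k \<and> shoot_r a k \<le> shoot_r b k"
  using assms(2)
proof (induction k)
  case 0
  then show ?case using assms(1) by simp
next
  case (Suc k)
  then have IH: "shoot_p a k < shoot_p b k" "shoot_r a k \<le> shoot_r b k"
    by auto
  have pa: "shoot_p a k > 0" and ra: "shoot_r a k \<ge> 0"
    using Suc.prems shoot_r_nonneg[of k a] by auto
  have "shoot_p a k * (shoot_p a k + shoot_r a k) < shoot_p b k * (shoot_p b k + shoot_r b k)"
    using IH pa ra by (intro mult_strict_mono) auto
  moreover have "1 / shoot_p b k < 1 / shoot_p a k"
    using IH pa by (simp add: frac_less2)
  ultimately show ?case
    using IH by (simp add: shoot_p_Suc shoot_r_Suc)
qed

lemma shoot_ge_2_stable:
  assumes "shoot_p a k \<ge> 2" "shoot_r a k \<ge> 0" "k \<le> m"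
  shows "shoot_p a m \<ge> 2 \<and> shoot_r a m \<ge> 0"
  using assms(3)
proof (induction m rule: dec_induct)
  case base
  then show ?case using assms by simp
next
  case (step i)
  then have "2 * 2 \<le> shoot_p a i * (shoot_p a i + shoot_r a i)"
    by (intro mult_mono) auto
  moreover have "1 / shoot_p a i \<le> 1"
    using step.IH by simp
  ultimately show ?case
    using step.IH unfolding shoot_p_Suc shoot_r_Suc by linarith
qed

lemma shoot_ge_1_stable:
  assumes "shoot_p a k \<ge> 1" "shoot_r a k \<ge> 1" "k \<le> m"
  shows "shoot_p a m \<ge> 1 \<and> shoot_r a m \<ge> 1"
  using assms(3)
proof (induction m rule: dec_induct)
  case base
  then show ?case using assms by simp
next
  case (step i)
  then have "1 * 2 \<le> shoot_p a i * (shoot_p a i + shoot_r a i)"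
    by (intro mult_mono) auto
  moreover have "1 / shoot_p a i \<le> shoot_p a i"
    using step.IH order.trans[of "1 / shoot_p a i" 1 "shoot_p a i"] by simp
  ultimately show ?case
    using step.IH unfolding shoot_p_Suc shoot_r_Suc by linarith
qed

lemma isCont_shoot:
  assumes "\<And>j. j < k \<Longrightarrow> shoot_p a j \<noteq> 0"
  shows "isCont (\<lambda>b. shoot_p b k) a \<and> isCont (\<lambda>b. shoot_r b k) a"
  using assms
proof (induction k)
  case 0
  then show ?case by (simp add: shoot_p_def shoot_r_def)
next
  case (Suc k)
  then have "isCont (\<lambda>b. shoot_p b k) a" "isCont (\<lambda>b. shoot_r b k) a" "shoot_p a k \<noteq> 0"
    by auto
  then show ?case
    unfolding shoot_p_Suc shoot_r_Suc by (intro conjI continuous_intros) auto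
qed

definition first_zero :: "nat \<Rightarrow> real \<Rightarrow> bool" where
  "first_zero n a \<longleftrightarrow> (\<forall>j<n. shoot_p a j > 0) \<and> shoot_p a n = 0"

lemma first_zero_unique: "first_zero n a \<Longrightarrow> first_zero n b \<Longrightarrow> a = b"
  using shoot_strict_mono[of a b n] shoot_strict_mono[of b a n]
  unfolding first_zero_def by (metis less_irrefl linorder_neqE_linordered_idom)

lemma first_zero_lt_2:
  assumes "first_zero n a"
  shows "a < 2"
proof (rule ccontr)
  assume "\<not> a < 2"
  then have "shoot_p a n \<ge> 2"
    using shoot_ge_2_stable[of a 0 n] by simp
  then show False
    using assms unfolding first_zero_def by simp
qed

lemma first_zero_shoot_above_pos:
  assumes "first_zero n a" "a < b" "j \<le> n"
  shows "shoot_p b j > 0"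
proof -
  have "shoot_p a j < shoot_p b j"
    using shoot_strict_mono[of a b j] assms unfolding first_zero_def by auto
  moreover have "shoot_p a j \<ge> 0"
    using assms unfolding first_zero_def by (cases "j < n") auto
  ultimately show ?thesis by linarith
qed

text \<open>Intermediate value theorem on \<open>[a, 2]\<close>: the orbit from \<open>a\<close> is negative at step \<open>n + 1\<close>,
  the orbit from \<open>2\<close> never drops below \<open>2\<close>, and no start in between has an earlier zero.\<close>

lemma first_zero_Suc_above:
  assumes fz: "first_zero n a"
  obtains c where "a < c" "first_zero (Suc n) c"
proof -
  have nonzero: "shoot_p b j \<noteq> 0" if "b \<in> {a..2}" "j < n" for b j
    using fz first_zero_shoot_above_pos[OF fz, of b j] that
    unfolding first_zero_def by (cases "b = a") auto
  have "continuous_on {a..2} (\<lambda>b. shoot_p b (Suc n))"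
    unfolding shoot_p_Suc
    by (intro continuous_at_imp_continuous_on ballI continuous_intros)
       (use isCont_shoot nonzero in blast)+
  moreover have "shoot_p a (Suc n) \<le> 0"
    using fz unfolding first_zero_def by (simp add: shoot_p_Suc)
  moreover have "0 \<le> shoot_p 2 (Suc n)"
    using shoot_ge_2_stable[of 2 0 "Suc n"] by simp
  ultimately obtain c where c: "a \<le> c" "c \<le> 2" "shoot_p c (Suc n) = 0"
    using IVT'[of "\<lambda>b. shoot_p b (Suc n)" a 0 2] first_zero_lt_2[OF fz] by auto
  have "c \<noteq> a"
    using c fz unfolding first_zero_def by (auto simp: shoot_p_Suc)
  then have "a < c"
    using c by auto
  moreover have "first_zero (Suc n) c"
    using first_zero_shoot_above_pos[OF fz \<open>a < c\<close>] c
    unfolding first_zero_def by (simp add: less_Suc_eq_le)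
  ultimately show thesis by (rule that)
qed

lemma first_zero_exists: "\<exists>a. first_zero n a"
proof (induction n)
  case 0
  have "first_zero 0 0" by (simp add: first_zero_def)
  then show ?case by blast
next
  case (Suc n)
  then show ?case using first_zero_Suc_above by metis
qed

definition start_val :: "nat \<Rightarrow> real" where
  "start_val n = (THE a. first_zero n a)"

lemma first_zero_start_val: "first_zero n (start_val n)"
  unfolding start_val_def using first_zero_exists first_zero_unique by (metis theI)

lemma start_val_eqI: "first_zero n a \<Longrightarrow> start_val n = a"
  using first_zero_start_val first_zero_unique by blast

lemma start_val_less_Suc: "start_val n < start_val (Suc n)"
  using first_zero_Suc_above[OF first_zero_start_val[of n]] start_val_eqI by metis

lemma start_val_lt_2: "start_val n < 2"
  using first_zero_lt_2 first_zero_start_val by blast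

lemma start_val_nonneg: "0 \<le> start_val n"
  using first_zero_start_val[of n] unfolding first_zero_def
  by (cases n) (auto intro: less_imp_le)

abbreviation traj_p :: "nat \<Rightarrow> nat \<Rightarrow> real" where
  "traj_p n \<equiv> shoot_p (start_val n)"

abbreviation traj_r :: "nat \<Rightarrow> nat \<Rightarrow> real" where
  "traj_r n \<equiv> shoot_r (start_val n)"

lemma traj_p_pos: "j < n \<Longrightarrow> traj_p n j > 0"
  and traj_p_zero: "traj_p n n = 0"
  using first_zero_start_val[of n] unfolding first_zero_def by auto

section \<open>Trajectories and their mirror symmetry\<close>

lemma Phi_Pair: "Phi (p, u) = (p^2 * (u + 1) - 1, 1 / p)"
  by (simp add: Phi_def)

text \<open>\<open>Phi\<close> is reversible: the swap \<open>(p, u) \<mapsto> (u, p)\<close> conjugates it to its inverse.\<close>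

lemma Phi_swap_Phi: "p \<noteq> 0 \<Longrightarrow> Phi (prod.swap (Phi (p, u))) = (u, p)"
  by (simp add: Phi_Pair field_simps power2_eq_square)

lemma is_traj_start_val:
  "is_traj n (traj_p n) (\<lambda>j. if j = 0 then 0 else 1 / traj_p n (j - 1))"
  unfolding is_traj_def
proof (intro conjI allI impI ballI)
  fix j assume j: "j \<in> {1..n}"
  then obtain m where m: "j = Suc m"
    by (cases j) auto
  have pm: "traj_p n m > 0"
    using traj_p_pos j m by auto
  then show "traj_p n (j - 1) \<noteq> 0"
    using m by simp
  have "traj_r n m = traj_p n m * (if m = 0 then 0 else 1 / traj_p n (m - 1))"
  proof (cases m)
    case (Suc i)
    then show ?thesis
      using shoot_r_Suc_eq_ratio[of "start_val n" i] traj_p_pos[of i n] j m by simp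
  qed simp
  then show "(traj_p n j, if j = 0 then 0 else 1 / traj_p n (j - 1)) =
        Phi (traj_p n (j - 1), if j - 1 = 0 then 0 else 1 / traj_p n (j - 1 - 1))"
    unfolding Phi_Pair m by (simp add: shoot_p_Suc power2_eq_square algebra_simps)
qed (simp_all add: traj_p_pos traj_p_zero)

lemma is_traj_shoot:
  assumes traj: "is_traj n p u" and "j \<le> n"
  shows "p j = shoot_p (p 0) j \<and> shoot_r (p 0) j = p j * u j"
  using assms(2)
proof (induction j)
  case 0
  then show ?case using traj unfolding is_traj_def by simp
next
  case (Suc j)
  then have IH: "p j = shoot_p (p 0) j" "shoot_r (p 0) j = p j * u j"
    by auto
  have "p j \<noteq> 0" "(p (Suc j), u (Suc j)) = Phi (p j, u j)"
    using traj Suc.prems unfolding is_traj_def by (auto simp: Suc_le_eq)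
  then have pj: "p j \<noteq> 0" and step: "p (Suc j) = p j ^ 2 * (u j + 1) - 1" "u (Suc j) = 1 / p j"
    unfolding Phi_Pair by auto
  show ?case
    unfolding shoot_p_Suc shoot_r_Suc IH(2) IH(1)[symmetric] step
    using pj by (simp add: field_simps power2_eq_square)
qed

lemma is_traj_eq_traj_p:
  assumes traj: "is_traj n p u" and "j \<le> n"
  shows "p j = traj_p n j"
proof -
  have shoot: "shoot_p (p 0) i = p i" if "i \<le> n" for i
    using is_traj_shoot[OF traj that] by simp
  have "first_zero n (p 0)"
    unfolding first_zero_def
  proof
    show "\<forall>i<n. shoot_p (p 0) i > 0"
      using traj shoot unfolding is_traj_def by simp
    show "shoot_p (p 0) n = 0"
      using traj shoot unfolding is_traj_def by simp
  qed
  then show ?thesis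
    using shoot[OF assms(2)] start_val_eqI by simp
qed

lemma p_traj_eq: "j \<le> n \<Longrightarrow> p_traj j n = traj_p n j"
  unfolding p_traj_def using is_traj_start_val is_traj_eq_traj_p by (intro the_equality) blast+

lemma is_traj_reverse:
  assumes traj: "is_traj n p u"
  shows "is_traj n (\<lambda>j. u (n - j)) (\<lambda>j. p (n - j))"
  unfolding is_traj_def
proof (intro conjI allI impI ballI)
  have pos: "p i > 0" if "i < n" for i
    using traj that unfolding is_traj_def by blast
  have step: "(p (Suc i), u (Suc i)) = Phi (p i, u i)" if "i < n" for i
  proof -
    have "Suc i \<in> {1..n}"
      using that by simp
    then show ?thesis
      using traj unfolding is_traj_def by (metis diff_Suc_1)
  qed
  have swapped_step: "(u (Suc i), p (Suc i)) = prod.swap (Phi (p i, u i))" if "i < n" for i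
    using step[OF that] by (metis swap_simp)
  fix j
  assume j: "j \<in> {1..n}"
  then have i: "n - j < n" "n - (j - 1) = Suc (n - j)"
    by auto
  show "u (n - (j - 1)) \<noteq> 0"
    using swapped_step[OF i(1)] pos[OF i(1)] unfolding i(2) by (simp add: Phi_Pair)
  show "(u (n - j), p (n - j)) = Phi (u (n - (j - 1)), p (n - (j - 1)))"
    unfolding i(2) swapped_step[OF i(1)] using Phi_swap_Phi pos[OF i(1)] by simp
next
  fix j
  assume j: "j < n"
  then have "(p (n - j), u (n - j)) = Phi (p (n - j - 1), u (n - j - 1))" "p (n - j - 1) > 0"
    using traj unfolding is_traj_def by auto
  then show "u (n - j) > 0"
    by (simp add: Phi_Pair)
qed (use traj in \<open>simp_all add: is_traj_def\<close>)

lemma traj_p_symmetric: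
  assumes "j < n"
  shows "traj_p n j * traj_p n (n - 1 - j) = 1"
proof -
  define u where "u j = (if j = 0 then 0 else 1 / traj_p n (j - 1))" for j
  have "is_traj n (\<lambda>j. u (n - j)) (\<lambda>j. traj_p n (n - j))"
    using is_traj_reverse is_traj_start_val unfolding u_def by blast
  then have "u (n - j) = traj_p n j"
    using is_traj_eq_traj_p assms by fastforce
  moreover have "traj_p n (n - 1 - j) > 0"
    using traj_p_pos assms by simp
  ultimately show ?thesis
    using assms unfolding u_def by (auto simp: Suc_diff_Suc field_simps)
qed

lemma traj_p_mirror:
  assumes "1 \<le> k" "k \<le> n"
  shows "traj_p n (n - k) = 1 / traj_p n (k - 1)"
proof -
  have "traj_p n (k - 1) > 0" "traj_p n (k - 1) * traj_p n (n - k) = 1"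
    using traj_p_pos[of "k - 1" n] traj_p_symmetric[of "k - 1" n] assms by (simp_all add: Suc_diff_Suc)
  then show ?thesis
    by (simp add: field_simps)
qed

lemma traj_r_eq_ratio:
  assumes "1 \<le> k" "k \<le> n"
  shows "traj_r n k = traj_p n k / traj_p n (k - 1)"
proof -
  have "traj_p n (k - 1) > 0"
    using traj_p_pos[of "k - 1" n] assms by simp
  then show ?thesis
    using shoot_r_Suc_eq_ratio[of "start_val n" "k - 1"] assms by simp
qed

lemma traj_r_mirror:
  assumes "1 \<le> k" "k < n"
  shows "traj_r n (n - k) = traj_r n k"
proof -
  have "traj_r n (n - k) = traj_p n (n - k) / traj_p n (n - Suc k)"
    using traj_r_eq_ratio[of "n - k" n] assms by (simp add: Suc_diff_Suc)
  also have "\<dots> = traj_p n k / traj_p n (k - 1)"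
    using traj_p_mirror[of k n] traj_p_mirror[of "Suc k" n] traj_p_pos[of k n] assms by simp
  finally show ?thesis
    using traj_r_eq_ratio[of k n] assms by simp
qed

section \<open>Shape of the trajectories\<close>

lemma traj_not_both_ge_1:
  assumes "j \<le> n"
  shows "\<not> (traj_p n j \<ge> 1 \<and> traj_r n j \<ge> 1)"
  using shoot_ge_1_stable[of "start_val n" j n] traj_p_zero[of n] assms by auto

text \<open>If \<open>r\<close> were at least \<open>1\<close> at \<open>k\<close>, it would be so at the mirror point \<open>n - k\<close> too,
  and \<open>p\<close> is at least \<open>1\<close> at one of the two points.\<close>

lemma traj_r_lt_1:
  assumes k: "1 \<le> k" "k < n"
  shows "traj_r n k < 1"
proof (rule ccontr)
  assume "\<not> traj_r n k < 1"
  then have r_ge: "traj_r n k \<ge> 1" "traj_r n (n - k) \<ge> 1"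
    using traj_r_mirror[OF k] by simp_all
  have pos: "traj_p n k > 0" "traj_p n (k - 1) > 0"
    using traj_p_pos k by auto
  have "traj_p n k < 1"
    using traj_not_both_ge_1[of k n] r_ge k by auto
  moreover have "traj_p n (k - 1) \<le> traj_p n k"
    using r_ge pos traj_r_eq_ratio[of k n] k by (simp add: le_divide_eq)
  ultimately have "traj_p n (n - k) \<ge> 1"
    using traj_p_mirror[of k n] pos k by simp
  then show False
    using traj_not_both_ge_1[of "n - k" n] r_ge by simp
qed

lemma traj_p_decreasing:
  assumes "k < n"
  shows "traj_p n (Suc k) < traj_p n k"
proof (cases "Suc k = n")
  case True
  then show ?thesis using traj_p_zero[of n] traj_p_pos[of k n] by simp
next
  case False
  then have "traj_p n (Suc k) / traj_p n k < 1"
    using traj_r_lt_1[of "Suc k" n] traj_r_eq_ratio[of "Suc k" n] assms by simp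
  then show ?thesis
    using traj_p_pos[OF assms] by (simp add: divide_less_eq)
qed

lemma traj_p_antitone:
  assumes "i \<le> j" "j \<le> n"
  shows "traj_p n j \<le> traj_p n i"
  using assms(1)
proof (induction j rule: dec_induct)
  case (step k)
  have "traj_p n (Suc k) < traj_p n k"
    using step.hyps(2) assms(2) by (intro traj_p_decreasing) simp
  then show ?case
    using step.IH by simp
qed simp

lemma traj_p_ge_1:
  assumes "2 * j + 1 \<le> n"
  shows "1 \<le> traj_p n j"
proof -
  have pos: "traj_p n j > 0"
    using traj_p_pos[of j n] assms by simp
  have "1 = traj_p n j * traj_p n (n - 1 - j)"
    using traj_p_symmetric[of j n] assms by simp
  also have "\<dots> \<le> traj_p n j * traj_p n j"
    using traj_p_antitone[of j "n - 1 - j" n] pos assms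
    by (intro mult_left_mono) simp_all
  finally have "1\<^sup>2 \<le> (traj_p n j)\<^sup>2"
    by (simp add: power2_eq_square)
  then show ?thesis
    using pos power2_le_imp_le[of 1 "traj_p n j"] by simp
qed

section \<open>The minimiser of \<open>f_fun\<close>\<close>

lemma sum_triangle_swap:
  fixes m n :: nat
  shows "(\<Sum>j=m..n. \<Sum>l=m..j. g j l) = (\<Sum>l=m..n. \<Sum>j=l..n. g j l)"
proof -
  have "(\<Sum>j=m..n. \<Sum>l=m..j. g j l) = (\<Sum>j=m..n. \<Sum>l\<in>{l. l \<in> {m..n} \<and> l \<le> j}. g j l)"
    by (intro sum.cong refl) (auto dest: order_trans)
  also have "\<dots> = (\<Sum>l=m..n. \<Sum>j\<in>{j. j \<in> {m..n} \<and> l \<le> j}. g j l)"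
    by (rule sum.swap_restrict) simp_all
  also have "\<dots> = (\<Sum>l=m..n. \<Sum>j=l..n. g j l)"
    by (intro sum.cong refl) auto
  finally show ?thesis .
qed

lemma sum_triangle_exchange:
  fixes Q :: "nat \<Rightarrow> nat \<Rightarrow> 'a::comm_semiring_0" and m n :: nat
  shows "(\<Sum>i=m..n. \<Sum>j=i..n. Q i j * (\<Sum>l=i..j. d l))
       = (\<Sum>l=m..n. d l * (\<Sum>i=m..l. \<Sum>j=l..n. Q i j))"
proof -
  have "(\<Sum>i=m..n. \<Sum>j=i..n. Q i j * (\<Sum>l=i..j. d l)) = (\<Sum>i=m..n. \<Sum>j=i..n. \<Sum>l=i..j. Q i j * d l)"
    by (simp add: sum_distrib_left)
  also have "\<dots> = (\<Sum>i=m..n. \<Sum>l=i..n. \<Sum>j=l..n. Q i j * d l)"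
    by (intro sum.cong refl sum_triangle_swap)
  also have "\<dots> = (\<Sum>l=m..n. \<Sum>i=m..l. \<Sum>j=l..n. Q i j * d l)"
    by (rule sum_triangle_swap[symmetric])
  also have "\<dots> = (\<Sum>l=m..n. d l * (\<Sum>i=m..l. \<Sum>j=l..n. Q i j))"
    by (simp add: sum_distrib_left sum_distrib_right mult.commute)
  finally show ?thesis .
qed

lemma ln_tangent_bound:
  fixes y c :: real
  assumes "0 < y" "0 < c"
  shows "c + c * (ln y - ln c) \<le> y"
proof -
  have "c * ln (y / c) \<le> c * (y / c - 1)"
    using assms by (intro mult_left_mono ln_le_minus_one) simp_all
  also have "\<dots> = y - c"
    using assms by (simp add: field_simps)
  finally show ?thesis
    using assms by (simp add: ln_div)
qed

lemma ln_prod_inverse: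
  assumes "finite A" "\<And>l. l \<in> A \<Longrightarrow> (x l :: real) > 0"
  shows "ln (\<Prod>l\<in>A. 1 / x l) = - (\<Sum>l\<in>A. ln (x l))"
proof -
  have "ln (\<Prod>l\<in>A. 1 / x l) = (\<Sum>l\<in>A. ln (1 / x l))"
    using assms by (intro ln_prod) (auto simp: less_imp_neq[symmetric])
  also have "\<dots> = (\<Sum>l\<in>A. - ln (x l))"
    using assms by (intro sum.cong refl) (simp add: ln_div)
  also have "\<dots> = - (\<Sum>l\<in>A. ln (x l))"
    by (rule sum_negf)
  finally show ?thesis .
qed

text \<open>The hypothesis \<open>critical\<close> says that the derivative of \<open>f_fun n\<close> with respect to
  \<open>ln (x k)\<close> vanishes.  As \<open>f_fun n\<close> is convex in the logarithms, such a point is a global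
  minimiser; the certificate is the tangent bound \<open>exp t \<ge> 1 + t\<close>, applied term by term.\<close>

lemma f_fun_critical_point_min:
  fixes x y :: "nat \<Rightarrow> real"
  assumes x_pos: "\<And>i. i \<in> {1..n} \<Longrightarrow> x i > 0" and y_pos: "\<And>i. i \<in> {1..n} \<Longrightarrow> y i > 0"
    and critical: "\<And>k. k \<in> {1..n} \<Longrightarrow> x k = (\<Sum>i=1..k. \<Sum>j=k..n. \<Prod>l=i..j. 1 / x l)"
  shows "f_fun n x \<le> f_fun n y"
proof -
  define d where "d l = ln (y l) - ln (x l)" for l
  define Q where "Q i j = (\<Prod>l=i..j. 1 / x l)" for i j
  have linear: "x i + x i * d i \<le> y i" if "i \<in> {1..n}" for i
    unfolding d_def using ln_tangent_bound x_pos y_pos that by blast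
  have monomial: "Q i j - Q i j * (\<Sum>l=i..j. d l) \<le> (\<Prod>l=i..j. 1 / y l)"
    if "i \<in> {1..n}" "j \<in> {i..n}" for i j
  proof -
    have pos: "\<And>l. l \<in> {i..j} \<Longrightarrow> x l > 0" "\<And>l. l \<in> {i..j} \<Longrightarrow> y l > 0"
      using that x_pos y_pos by auto
    have "ln (\<Prod>l=i..j. 1 / y l) - ln (Q i j) = - (\<Sum>l=i..j. d l)"
      using ln_prod_inverse[of "{i..j}" x] ln_prod_inverse[of "{i..j}" y] pos
      by (simp add: Q_def d_def sum_subtractf)
    moreover have "(\<Prod>l=i..j. 1 / y l) > 0" "Q i j > 0"
      unfolding Q_def using pos by (auto intro: prod_pos)
    ultimately show ?thesis
      using ln_tangent_bound[of "\<Prod>l=i..j. 1 / y l" "Q i j"] by simp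
  qed
  have "(\<Sum>i=1..n. x i + x i * d i) + (\<Sum>i=1..n. \<Sum>j=i..n. Q i j - Q i j * (\<Sum>l=i..j. d l))
      \<le> f_fun n y"
    unfolding f_fun_def by (intro add_mono sum_mono linear monomial) auto
  moreover have "(\<Sum>i=1..n. \<Sum>j=i..n. Q i j * (\<Sum>l=i..j. d l)) = (\<Sum>l=1..n. d l * x l)"
    unfolding sum_triangle_exchange using critical by (intro sum.cong) (auto simp: Q_def)
  ultimately show ?thesis
    unfolding f_fun_def Q_def by (simp add: sum.distrib sum_subtractf mult.commute)
qed

definition crit_pt :: "nat \<Rightarrow> nat \<Rightarrow> real" where
  "crit_pt n k = traj_p n (k - 1) + traj_r n (k - 1)"

lemma crit_pt_pos:
  assumes "k \<in> {1..n}"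
  shows "crit_pt n k > 0"
proof -
  have "traj_p n (k - 1) > 0" "traj_r n (k - 1) \<ge> 0"
    using assms traj_p_pos shoot_r_nonneg[of "k - 1" "start_val n"] by auto
  then show ?thesis
    unfolding crit_pt_def by simp
qed

lemma traj_p_eq_crit_pt: "1 \<le> k \<Longrightarrow> traj_p n k = traj_p n (k - 1) * crit_pt n k - 1"
  unfolding crit_pt_def using shoot_p_Suc[of "start_val n" "k - 1"] by simp

lemma left_prod_sum:
  assumes "1 \<le> k" "k \<le> n"
  shows "(\<Sum>i=1..k. \<Prod>l=i..k. 1 / crit_pt n l) = 1 / traj_p n (k - 1)"
  using assms
proof (induction k rule: nat_induct_at_least)
  case base
  then show ?case by (simp add: crit_pt_def)
next
  case (Suc k)
  have pos: "traj_p n k > 0" "traj_p n (k - 1) > 0"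
    using traj_p_pos Suc by auto
  have IH: "(\<Sum>i=1..k. \<Prod>l=i..k. 1 / crit_pt n l) = 1 / traj_p n (k - 1)"
    using Suc by simp
  have "(\<Sum>i=1..Suc k. \<Prod>l=i..Suc k. 1 / crit_pt n l)
      = (\<Sum>i=1..k. (\<Prod>l=i..k. 1 / crit_pt n l) * (1 / crit_pt n (Suc k))) + 1 / crit_pt n (Suc k)"
    using Suc.hyps by simp
  also have "\<dots> = (1 / traj_p n (k - 1) + 1) / crit_pt n (Suc k)"
    by (simp only: sum_distrib_right[symmetric] IH) (simp add: add_divide_distrib)
  also have "\<dots> = 1 / traj_p n k"
  proof -
    have "crit_pt n (Suc k) = traj_p n k * (1 / traj_p n (k - 1) + 1)"
      using pos traj_r_eq_ratio[of k n] Suc by (simp add: crit_pt_def field_simps)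
    moreover have "1 / traj_p n (k - 1) + 1 > 0"
      using pos by (simp add: add_pos_pos)
    ultimately show ?thesis
      using pos by simp
  qed
  finally show ?case by simp
qed

lemma right_prod_sum:
  assumes "1 \<le> k" "k \<le> n + 1"
  shows "(\<Sum>j=k..n. \<Prod>l=k..j. 1 / crit_pt n l) = traj_p n (k - 1)"
  using assms(2,1)
proof (induction k rule: inc_induct)
  case base
  then show ?case using traj_p_zero by simp
next
  case (step k)
  have "(\<Sum>j=k..n. \<Prod>l=k..j. 1 / crit_pt n l)
      = 1 / crit_pt n k + (\<Sum>j=Suc k..n. \<Prod>l=k..j. 1 / crit_pt n l)"
    using step.hyps by (simp add: sum.atLeast_Suc_atMost)
  also have "(\<Sum>j=Suc k..n. \<Prod>l=k..j. 1 / crit_pt n l)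
      = 1 / crit_pt n k * (\<Sum>j=Suc k..n. \<Prod>l=Suc k..j. 1 / crit_pt n l)"
    unfolding sum_distrib_left by (intro sum.cong refl) (simp add: prod.atLeast_Suc_atMost)
  also have "1 / crit_pt n k + \<dots> = (1 + traj_p n k) / crit_pt n k"
    using step by (simp add: add_divide_distrib)
  also have "\<dots> = traj_p n (k - 1)"
    using crit_pt_pos[of k n] traj_p_eq_crit_pt[of k n] step by simp
  finally show ?case .
qed

lemma crit_pt_critical:
  assumes k: "k \<in> {1..n}"
  shows "crit_pt n k = (\<Sum>i=1..k. \<Sum>j=k..n. \<Prod>l=i..j. 1 / crit_pt n l)"
proof -
  have split: "(\<Prod>l=i..j. 1 / crit_pt n l) = (\<Prod>l=i..k. 1 / crit_pt n l) * (\<Prod>l=Suc k..j. 1 / crit_pt n l)"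
    if "i \<le> k" "k \<le> j" for i j
  proof -
    have "{i..j} = {i..k} \<union> {Suc k..j}"
      using that by auto
    then show ?thesis
      by (simp add: prod.union_disjoint)
  qed
  have "(\<Sum>i=1..k. \<Sum>j=k..n. \<Prod>l=i..j. 1 / crit_pt n l)
      = (\<Sum>i=1..k. \<Sum>j=k..n. (\<Prod>l=i..k. 1 / crit_pt n l) * (\<Prod>l=Suc k..j. 1 / crit_pt n l))"
    by (intro sum.cong refl split) auto
  also have "\<dots> = (\<Sum>i=1..k. \<Prod>l=i..k. 1 / crit_pt n l) * (\<Sum>j=k..n. \<Prod>l=Suc k..j. 1 / crit_pt n l)"
    by (rule sum_product[symmetric])
  also have "(\<Sum>j=k..n. \<Prod>l=Suc k..j. 1 / crit_pt n l) = 1 + traj_p n k"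
    using k right_prod_sum[of "Suc k" n] by (simp add: sum.atLeast_Suc_atMost)
  also have "(\<Sum>i=1..k. \<Prod>l=i..k. 1 / crit_pt n l) = 1 / traj_p n (k - 1)"
    using k left_prod_sum[of k n] by simp
  finally have "(\<Sum>i=1..k. \<Sum>j=k..n. \<Prod>l=i..j. 1 / crit_pt n l) = (1 + traj_p n k) / traj_p n (k - 1)"
    by simp
  moreover have "traj_p n (k - 1) > 0"
    using k by (intro traj_p_pos) auto
  ultimately show ?thesis
    using k traj_p_eq_crit_pt[of k n] by simp
qed

lemma f_fun_crit_pt: "f_fun n (crit_pt n) = (\<Sum>j<n. 2 * traj_p n j + traj_r n j)"
proof -
  have "f_fun n (crit_pt n) = (\<Sum>i=1..n. crit_pt n i) + (\<Sum>i=1..n. traj_p n (i - 1))"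
    unfolding f_fun_def using right_prod_sum by (intro arg_cong2[where f="(+)"] sum.cong) auto
  also have "\<dots> = (\<Sum>j<n. crit_pt n (Suc j) + traj_p n j)"
    by (simp add: sum.atLeast1_atMost_eq sum.distrib)
  finally show ?thesis
    by (simp add: crit_pt_def)
qed

lemma A_val_eq: "A_val n = (\<Sum>j<n. 2 * traj_p n j + traj_r n j)"
proof -
  have "A_val n = f_fun n (crit_pt n)"
    unfolding A_val_def
  proof (rule cInf_eq_minimum)
    show "f_fun n (crit_pt n) \<in> f_fun n ` {x. \<forall>i\<in>{1..n}. x i > 0}"
      using crit_pt_pos by blast
  next
    fix y
    assume "y \<in> f_fun n ` {x. \<forall>i\<in>{1..n}. x i > 0}"
    then show "f_fun n (crit_pt n) \<le> y"
      using f_fun_critical_point_min crit_pt_pos crit_pt_critical by force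
  qed
  then show ?thesis
    using f_fun_crit_pt by simp
qed

definition gap :: "real \<Rightarrow> nat \<Rightarrow> real" where
  "gap a j = 3 - 2 * shoot_p a j - shoot_r a j"

lemma C_val_eq: "C_val n = (\<Sum>j<n. gap (start_val n) j)"
  unfolding C_val_def A_val_eq gap_def by (simp add: sum_subtractf sum.distrib)

section \<open>The limit orbit\<close>

definition start_lim :: real where
  "start_lim = lim start_val"

lemma start_val_tendsto: "start_val \<longlonglongrightarrow> start_lim"
  and start_val_less_lim: "start_val n < start_lim"
proof -
  have "incseq start_val"
    by (rule incseq_SucI) (simp add: start_val_less_Suc less_imp_le)
  moreover have "\<forall>i. start_val i \<le> 2"
    using start_val_lt_2 less_imp_le by blast
  ultimately obtain L where L: "start_val \<longlonglongrightarrow> L" "\<forall>i. start_val i \<le> L"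
    by (rule incseq_convergent)
  then have "start_lim = L"
    unfolding start_lim_def by (simp add: limI)
  then show "start_val \<longlonglongrightarrow> start_lim" "start_val n < start_lim"
    using L start_val_less_Suc[of n] by (auto intro: less_le_trans)
qed

lemma start_lim_le_2: "start_lim \<le> 2"
  using LIMSEQ_le_const2[OF start_val_tendsto] start_val_lt_2 less_imp_le by blast

lemma traj_below_lim:
  assumes "j \<le> n"
  shows "traj_p n j < shoot_p start_lim j \<and> traj_r n j \<le> shoot_r start_lim j"
  using shoot_strict_mono[OF start_val_less_lim] traj_p_pos assms by auto

lemma shoot_p_lim_pos: "shoot_p start_lim j > 0"
  using traj_below_lim[of j "Suc j"] traj_p_pos[of j "Suc j"] by simp

lemma traj_tendsto:
  "(\<lambda>n. traj_p n j) \<longlonglongrightarrow> shoot_p start_lim j" "(\<lambda>n. traj_r n j) \<longlonglongrightarrow> shoot_r start_lim j"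
proof -
  have "isCont (\<lambda>b. shoot_p b j) start_lim \<and> isCont (\<lambda>b. shoot_r b j) start_lim"
    using isCont_shoot[of j start_lim] shoot_p_lim_pos by (simp add: less_imp_neq[symmetric])
  then show "(\<lambda>n. traj_p n j) \<longlonglongrightarrow> shoot_p start_lim j" "(\<lambda>n. traj_r n j) \<longlonglongrightarrow> shoot_r start_lim j"
    using isCont_tendsto_compose[OF _ start_val_tendsto] by blast+
qed

lemma shoot_p_lim_decreasing: "shoot_p start_lim (Suc j) \<le> shoot_p start_lim j"
proof (rule LIMSEQ_le[OF traj_tendsto(1) traj_tendsto(1)])
  show "\<exists>N. \<forall>n\<ge>N. traj_p n (Suc j) \<le> traj_p n j"
    by (intro exI[of _ "Suc j"] allI impI less_imp_le traj_p_decreasing) simp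
qed

lemma shoot_p_lim_ge_1: "1 \<le> shoot_p start_lim j"
proof (rule LIMSEQ_le_const[OF traj_tendsto(1)])
  show "\<exists>N. \<forall>n\<ge>N. 1 \<le> traj_p n j"
    by (intro exI[of _ "2 * j + 1"] allI impI traj_p_ge_1)
qed

lemma second_order_contraction:
  fixes q s :: real
  assumes q: "1 \<le> q" and s: "0 < s" and h: "q^2 * (1 + 1 / s) \<le> q + 1"
  shows "3 * (q - 1) \<le> s - 1"
proof -
  define w where "w = q + 1 - q^2"
  have sw: "q^2 \<le> s * w"
    using h s unfolding w_def by (simp add: field_simps)
  have "0 < s * w"
    using sw q by (smt (verit) zero_less_power)
  then have w_pos: "w > 0"
    using s by (simp add: zero_less_mult_iff)
  have "q^2 - (3 * q - 2) * w = (q - 1)^2 * (3 * q + 2)"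
    unfolding w_def by (simp add: algebra_simps power2_eq_square)
  moreover have "(q - 1)^2 * (3 * q + 2) \<ge> 0"
    using q by simp
  ultimately have "(3 * q - 2) * w \<le> s * w"
    using sw by linarith
  then show ?thesis
    using w_pos by simp
qed

lemma shoot_p_lim_bound: "shoot_p start_lim j - 1 \<le> (1 / 3) ^ j"
proof (induction j)
  case 0
  then show ?case using start_lim_le_2 by simp
next
  case (Suc j)
  have "shoot_p start_lim (Suc j) ^ 2 * (1 + 1 / shoot_p start_lim j) \<le> shoot_p start_lim (Suc j) + 1"
    using shoot_p_second_order[of start_lim j] shoot_p_lim_pos[of j] shoot_p_lim_decreasing[of "Suc j"]
    by simp
  then have "3 * (shoot_p start_lim (Suc j) - 1) \<le> shoot_p start_lim j - 1"
    using second_order_contraction shoot_p_lim_ge_1 shoot_p_lim_pos by blast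
  then show ?case
    using Suc.IH by simp
qed

section \<open>Geometric bounds\<close>

lemma near_one_bounds:
  fixes d e p r :: real
  assumes "0 \<le> d" "0 \<le> e" "1 / (1 + e) \<le> p" "p \<le> 1 + d" "1 / (1 + e)^2 \<le> r" "r \<le> 1"
  shows "\<bar>3 - 2 * p - r\<bar> \<le> 2 * d + 4 * e \<and> \<bar>p - 1\<bar> \<le> d + e \<and> \<bar>r - 1\<bar> \<le> 2 * e"
proof -
  have "(1 - e) * (1 + e) \<le> 1"
    by (simp add: algebra_simps)
  then have p_lower: "1 - e \<le> 1 / (1 + e)"
    using assms(2) by (simp add: le_divide_eq)
  have "(1 - 2 * e) * (1 + e)^2 = 1 - 3 * e^2 - 2 * e^3"
    by (simp add: algebra_simps power2_eq_square power3_eq_cube)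
  moreover have "0 \<le> 3 * e^2 + 2 * e^3"
    using assms(2) by simp
  ultimately have "(1 - 2 * e) * (1 + e)^2 \<le> 1"
    by linarith
  then have r_lower: "1 - 2 * e \<le> 1 / (1 + e)^2"
    using assms(2) by (simp add: le_divide_eq)
  show ?thesis
    using p_lower r_lower assms by (auto simp: abs_if)
qed

text \<open>The box containing \<open>(p\<^sub>j, r\<^sub>j)\<close> both for the limit orbit and for every \<open>T\<^sub>n\<close> with
  \<open>2 j \<le> n\<close>; it shrinks geometrically to \<open>(1, 1)\<close>.\<close>

definition in_window :: "nat \<Rightarrow> real \<Rightarrow> real \<Rightarrow> bool" where
  "in_window j p r \<longleftrightarrow>
     1 / shoot_p start_lim (j - 1) \<le> p \<and> p \<le> shoot_p start_lim j \<and>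
     1 / shoot_p start_lim (j - 1) ^ 2 \<le> r \<and> r \<le> 1"

lemma window_bounds:
  assumes j: "1 \<le> j" and "in_window j p r"
  shows "\<bar>3 - 2 * p - r\<bar> \<le> 14 * (1 / 3) ^ j \<and> \<bar>p - 1\<bar> \<le> 4 * (1 / 3) ^ j \<and> \<bar>r - 1\<bar> \<le> 6 * (1 / 3) ^ j"
proof -
  define d where "d = shoot_p start_lim j - 1"
  define e where "e = shoot_p start_lim (j - 1) - 1"
  have d: "0 \<le> d" "d \<le> (1 / 3) ^ j"
    unfolding d_def using shoot_p_lim_ge_1 shoot_p_lim_bound by auto
  have "(1 / 3 :: real) ^ (j - 1) = 3 * (1 / 3) ^ j"
    using j by (cases j) auto
  then have e: "0 \<le> e" "e \<le> 3 * (1 / 3) ^ j"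
    unfolding e_def using shoot_p_lim_ge_1 shoot_p_lim_bound[of "j - 1"] by auto
  have "\<bar>3 - 2 * p - r\<bar> \<le> 2 * d + 4 * e \<and> \<bar>p - 1\<bar> \<le> d + e \<and> \<bar>r - 1\<bar> \<le> 2 * e"
    using near_one_bounds[of d e p r] d e assms(2) unfolding in_window_def d_def e_def by simp
  then show ?thesis
    using d e by linarith
qed

lemma traj_in_window:
  assumes j: "1 \<le> j" "2 * j \<le> n"
  shows "in_window j (traj_p n j) (traj_r n j)"
proof -
  have pos: "traj_p n j > 0" "traj_p n (j - 1) > 0"
    using traj_p_pos j by auto
  have jn: "j - 1 < n" "j \<le> n"
    using j by auto
  have below: "traj_p n (j - 1) \<le> shoot_p start_lim (j - 1)"
    using traj_below_lim[of "j - 1" n] j by (auto simp: less_imp_le)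
  have "traj_p n (n - Suc j) \<le> traj_p n (j - 1)"
    using traj_p_antitone[of "j - 1" "n - Suc j" n] j by simp
  also note below
  finally have "1 / shoot_p start_lim (j - 1) \<le> traj_p n j"
    using traj_p_mirror[of "Suc j" n] shoot_p_lim_pos[of "j - 1"] pos j by (auto simp: field_simps)
  moreover have "traj_p n j \<le> shoot_p start_lim j"
    using traj_below_lim[of j n] j by simp
  moreover have "traj_r n j \<le> 1"
    using traj_r_eq_ratio[of j n] traj_p_decreasing[OF jn(1)] pos j jn by simp
  moreover have "1 / shoot_p start_lim (j - 1) ^ 2 \<le> traj_r n j"
  proof -
    have "1 / shoot_p start_lim (j - 1) ^ 2 = (1 / shoot_p start_lim (j - 1)) / shoot_p start_lim (j - 1)"
      by (simp add: power2_eq_square)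
    also have "\<dots> \<le> traj_p n j / shoot_p start_lim (j - 1)"
      using \<open>1 / shoot_p start_lim (j - 1) \<le> traj_p n j\<close> shoot_p_lim_pos[of "j - 1"]
      by (intro divide_right_mono) simp_all
    also have "\<dots> \<le> traj_p n j / traj_p n (j - 1)"
      using below pos by (simp add: frac_le)
    finally show ?thesis
      using traj_r_eq_ratio[of j n] j by simp
  qed
  ultimately show ?thesis
    unfolding in_window_def by blast
qed

lemma lim_in_window:
  assumes j: "1 \<le> j"
  shows "in_window j (shoot_p start_lim j) (shoot_r start_lim j)"
proof -
  let ?p = "shoot_p start_lim"
  have pos: "?p (j - 1) > 0" "?p j > 0" and ge: "1 \<le> ?p (j - 1)" "1 \<le> ?p j"
    using shoot_p_lim_pos shoot_p_lim_ge_1 by auto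
  have r: "shoot_r start_lim j = ?p j / ?p (j - 1)"
    using shoot_r_Suc_eq_ratio[of start_lim "j - 1"] pos j by simp
  have "1 / ?p (j - 1) ^ 2 \<le> 1 / ?p (j - 1)"
    using ge pos by (simp add: power2_eq_square frac_le)
  also have "\<dots> \<le> ?p j / ?p (j - 1)"
    using ge pos by (simp add: divide_right_mono)
  finally show ?thesis
    unfolding in_window_def r
    using ge pos shoot_p_lim_decreasing[of "j - 1"] j
    by (simp add: order_trans[OF _ ge(2)])
qed

lemma gap_traj_bound:
  assumes "2 * j \<le> n"
  shows "\<bar>gap (start_val n) j\<bar> \<le> 14 * (1 / 3) ^ j"
proof (cases "j = 0")
  case True
  then show ?thesis
    using start_val_nonneg[of n] start_val_lt_2[of n] by (simp add: gap_def)
next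
  case False
  then show ?thesis
    using window_bounds[OF _ traj_in_window[OF _ assms]] unfolding gap_def by simp
qed

lemma gap_lim_bound: "\<bar>gap start_lim j\<bar> \<le> 14 * (1 / 3) ^ j"
proof (cases "j = 0")
  case True
  then show ?thesis
    using shoot_p_lim_pos[of 0] start_lim_le_2 by (simp add: gap_def)
next
  case False
  then show ?thesis
    using window_bounds[OF _ lim_in_window] unfolding gap_def by simp
qed

lemma summable_gap_lim: "summable (gap start_lim)"
proof (rule summable_comparison_test)
  show "\<exists>N. \<forall>n\<ge>N. norm (gap start_lim n) \<le> 14 * (1 / 3) ^ n"
    using gap_lim_bound by auto
  show "summable (\<lambda>n. 14 * (1 / 3 :: real) ^ n)"
    by (intro summable_mult summable_geometric) simp
qed

lemma gap_partial_sums_tendsto: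
  assumes c: "filterlim c at_top sequentially" and c_le: "\<And>n. c n \<le> Suc (n div 2)"
  shows "(\<lambda>n. \<Sum>j<c n. gap (start_val n) j) \<longlonglongrightarrow> (\<Sum>j. gap start_lim j)"
proof -
  define g where "g j n = (if j < c n then gap (start_val n) j else 0)" for j n
  have g_sum: "(\<Sum>j. g j n) = (\<Sum>j<c n. gap (start_val n) j)" for n
    by (subst suminf_finite[of "{..<c n}"]) (auto simp: g_def)
  have g_tendsto: "(\<lambda>n. g j n) \<longlonglongrightarrow> gap start_lim j" for j
  proof -
    have "(\<lambda>n. gap (start_val n) j) \<longlonglongrightarrow> gap start_lim j"
      unfolding gap_def by (intro tendsto_intros traj_tendsto)
    moreover have "eventually (\<lambda>n. Suc j \<le> c n) sequentially"
      using c by (simp add: filterlim_at_top)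
    then have "eventually (\<lambda>n. gap (start_val n) j = g j n) sequentially"
      by eventually_elim (simp add: g_def)
    ultimately show ?thesis
      by (rule Lim_transform_eventually)
  qed
  have "norm (g j n) \<le> 14 * (1 / 3) ^ j" for j n
    using gap_traj_bound[of j n] c_le[of n] unfolding g_def by auto
  then have "eventually (\<lambda>(j, n). norm (g j n) \<le> 14 * (1 / 3) ^ j) (at_top \<times>\<^sub>F sequentially)"
    by (simp add: always_eventually)
  moreover have "summable (\<lambda>j. 14 * (1 / 3 :: real) ^ j)"
    by (intro summable_mult summable_geometric) simp
  ultimately have "(\<lambda>n. \<Sum>j. g j n) \<longlonglongrightarrow> (\<Sum>j. gap start_lim j)"
    using tannerys_theorem[where a = g and b = "gap start_lim", OF g_tendsto] by simp
  then show ?thesis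
    by (simp add: g_sum)
qed

section \<open>Convergence of \<open>C_val\<close>\<close>

lemma sum_gap_reflected:
  "(\<Sum>k=1..K. 3 - 2 / shoot_p a (k - 1) - shoot_r a k)
     = (\<Sum>j<Suc K. gap a j) - 3 + 2 * shoot_p a K + 2 * shoot_r a K"
proof (induction K)
  case 0
  then show ?case by (simp add: gap_def)
next
  case (Suc K)
  then show ?case
    by (simp add: gap_def shoot_r_Suc[of a K] algebra_simps)
qed

lemma gap_traj_mirror:
  assumes "1 \<le> k" "k < n"
  shows "gap (start_val n) (n - k) = 3 - 2 / traj_p n (k - 1) - traj_r n k"
  unfolding gap_def using traj_p_mirror[of k n] traj_r_mirror[of k n] assms by simp

text \<open>By the mirror symmetry the upper half of the sum for \<open>C_val n\<close> is a reflected copy of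
  the lower half; the boundary terms at the middle index tend to \<open>-3 + 2 + 2 = 1\<close>.\<close>

lemma C_val_split:
  "C_val n = (\<Sum>j<n - n div 2. gap (start_val n) j) +
     ((\<Sum>j<Suc (n div 2). gap (start_val n) j) - 3 + 2 * traj_p n (n div 2) + 2 * traj_r n (n div 2))"
proof -
  define K where "K = n div 2"
  have K: "K \<le> n"
    unfolding K_def by simp
  have "C_val n = (\<Sum>j<n - K. gap (start_val n) j) + (\<Sum>j=n - K..<n. gap (start_val n) j)"
    unfolding C_val_eq using sum.atLeastLessThan_concat[of 0 "n - K" n "gap (start_val n)"]
    by (simp add: atLeast0LessThan)
  also have "(\<Sum>j=n - K..<n. gap (start_val n) j) = (\<Sum>k=1..K. gap (start_val n) (n - k))"
    by (rule sum.reindex_bij_witness[where i="\<lambda>k. n - k" and j="\<lambda>j. n - j"]) (use K in auto)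
  also have "\<dots> = (\<Sum>k=1..K. 3 - 2 / traj_p n (k - 1) - traj_r n k)"
    using K unfolding K_def by (intro sum.cong refl gap_traj_mirror) auto
  finally show ?thesis
    unfolding sum_gap_reflected K_def .
qed

lemma traj_mid_tendsto:
  "(\<lambda>n. traj_p n (n div 2)) \<longlonglongrightarrow> 1" "(\<lambda>n. traj_r n (n div 2)) \<longlonglongrightarrow> 1"
proof -
  have "(\<lambda>n. (1 / 3 :: real) ^ (n div 2)) \<longlonglongrightarrow> 0"
    using filterlim_compose[OF LIMSEQ_power_zero filterlim_at_top_div_const_nat, of "1 / 3 :: real" 2] by simp
  then have bound_tendsto: "(\<lambda>n. 6 * (1 / 3 :: real) ^ (n div 2)) \<longlonglongrightarrow> 0"
    by (rule tendsto_mult_right_zero)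
  have close: "eventually (\<lambda>n. \<bar>traj_p n (n div 2) - 1\<bar> \<le> 6 * (1 / 3) ^ (n div 2) \<and>
                         \<bar>traj_r n (n div 2) - 1\<bar> \<le> 6 * (1 / 3) ^ (n div 2)) sequentially"
    using eventually_ge_at_top[of 2]
  proof eventually_elim
    case (elim n)
    then have "1 \<le> n div 2"
      by simp
    then have "\<bar>traj_p n (n div 2) - 1\<bar> \<le> 4 * (1 / 3) ^ (n div 2)"
        "\<bar>traj_r n (n div 2) - 1\<bar> \<le> 6 * (1 / 3) ^ (n div 2)"
      using window_bounds traj_in_window[of "n div 2" n] by auto
    moreover have "(0 :: real) \<le> (1 / 3) ^ (n div 2)"
      by simp
    ultimately show ?case
      by linarith
  qed
  have "(\<lambda>n. traj_p n (n div 2) - 1) \<longlonglongrightarrow> 0"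
    by (rule Lim_null_comparison[OF eventually_mono[OF close] bound_tendsto]) simp
  moreover have "(\<lambda>n. traj_r n (n div 2) - 1) \<longlonglongrightarrow> 0"
    by (rule Lim_null_comparison[OF eventually_mono[OF close] bound_tendsto]) simp
  ultimately show "(\<lambda>n. traj_p n (n div 2)) \<longlonglongrightarrow> 1" "(\<lambda>n. traj_r n (n div 2)) \<longlonglongrightarrow> 1"
    by (auto intro: LIM_zero_cancel)
qed

lemma C_val_tendsto: "C_val \<longlonglongrightarrow> 2 * (\<Sum>j. gap start_lim j) + 1"
proof -
  have half: "filterlim (\<lambda>n::nat. n div 2) at_top sequentially"
    by (rule filterlim_at_top_div_const_nat) simp
  have "(\<lambda>n. \<Sum>j<n - n div 2. gap (start_val n) j) \<longlonglongrightarrow> (\<Sum>j. gap start_lim j)"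
    by (rule gap_partial_sums_tendsto[OF filterlim_at_top_mono[OF half]])
       (auto intro: always_eventually)
  moreover have "(\<lambda>n. \<Sum>j<Suc (n div 2). gap (start_val n) j) \<longlonglongrightarrow> (\<Sum>j. gap start_lim j)"
    by (rule gap_partial_sums_tendsto[OF filterlim_at_top_mono[OF half]]) auto
  ultimately have "C_val \<longlonglongrightarrow> (\<Sum>j. gap start_lim j) + ((\<Sum>j. gap start_lim j) - 3 + 2 * 1 + 2 * 1)"
    unfolding C_val_split[abs_def] by (intro tendsto_intros traj_mid_tendsto)
  then show ?thesis
    by simp
qed

theorem theorem1:
  shows "\<exists>pstar :: nat \<Rightarrow> real.
           (\<forall>j. (\<lambda>n. p_traj j n) \<longlonglongrightarrow> pstar j) \<and>
           (let ustar = (\<lambda>j. if j = 0 then 0 else 1 / pstar (j - 1));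
                S_N = (\<lambda>N. \<Sum>j=0..N. 3 - 2 * pstar j - pstar j * ustar j)
            in \<exists>S C. S_N \<longlonglongrightarrow> S \<and> C_val \<longlonglongrightarrow> C \<and> C = 2 * S + 1)"
proof -
  define pstar where "pstar = shoot_p start_lim"
  have "(\<lambda>n. p_traj j n) \<longlonglongrightarrow> pstar j" for j
  proof -
    have "eventually (\<lambda>n. traj_p n j = p_traj j n) sequentially"
      using eventually_ge_at_top[of j] by eventually_elim (simp add: p_traj_eq)
    then show ?thesis
      using Lim_transform_eventually traj_tendsto(1) unfolding pstar_def by blast
  qed
  moreover have "3 - 2 * pstar j - pstar j * (if j = 0 then 0 else 1 / pstar (j - 1)) = gap start_lim j" for j
    using shoot_r_Suc_eq_ratio[of start_lim "j - 1"] shoot_p_lim_pos[of "j - 1"]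
    unfolding pstar_def gap_def by (cases j) auto
  then have "(\<lambda>N. \<Sum>j=0..N. 3 - 2 * pstar j - pstar j * (if j = 0 then 0 else 1 / pstar (j - 1)))
      \<longlonglongrightarrow> (\<Sum>j. gap start_lim j)"
    using LIMSEQ_Suc[OF summable_LIMSEQ[OF summable_gap_lim]]
    by (simp add: atLeast0AtMost lessThan_Suc_atMost)
  ultimately show ?thesis
    unfolding Let_def using C_val_tendsto by blast
qed

end
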